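(* Let $F \leq F' \leq \hat F \leq \mathrm{Sym}(\Omega)$ be permutation groups (so $F'$ stabilizes the orbits of $F$), and assume that for every $a\in\Omega$ the point stabilizer $F_a$ is equal to its normalizer in $F'_a$. Then for every compact open subgroup $K$ of $U(F)$, one has $\mathrm{Comm}_{U(F')}(K) = G(F,F')$.
   Context: Standing notation. $\Omega$ is a finite set with $d=|\Omega|\geq 3$, $\mathcal{T}_d$ is the $d$-regular tree with vertex set $V$ and set $E$ of non-oriented edges, and $\mathrm{Aut}(\mathcal{T}_d)$ carries the permutation topology. Fix a coloring $c:E\to\Omega$ such that for every vertex $v$ its restriction $c_v$ to the set $E(v)$ of edges containing $v$ is a bijection onto $\Omega$. For $g\in\mathrm{Aut}(\mathcal{T}_d)$ and $v\in V$, the local permutation is $\sigma(g,v)=c_{gv}\circ g_v\circ c_v^{-1}\in\mathrm{Sym}(\Omega)$, where $g_v:E(v)\to E(gv)$ is induced by $g$. For $F\leq\mathrm{Sym}(\Omega)$: $U(F)=\{g:\sigma(g,v)\in F \ \forall v\}$ (a closed subgroup of $\mathrm{Aut}(\mathcal{T}_d)$, with the induced topology); $G(F)=\{g:\sigma(g,v)\in F \text{ for all but finitely many } v\}$; $\hat F$ is the subgroup of permutations preserving each $F$-orbit. For $F\leq F'\leq\hat F$, $G(F,F')=G(F)\cap U(F')$. $F_a$, $F'_a$ are stabilizers of $a$. For a profinite group $K$ contained in a group $L$, the relative commensurator $\mathrm{Comm}_L(K)$ is the set of $g\in L$ such that there are open subgroups $K_1,K_2\leq K$ with $gK_1g^{-1}=K_2$.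 *)

theory Defs
  imports "HOL-Analysis.Analysis" "HOL-Algebra.Bij"
begin

text \<open>Model: Omega is a finite type 'a. The vertices of the |Omega|-regular tree are the
reduced words over Omega (no two consecutive equal letters); the word w is adjacent to
w @ [a] (for a different from the last letter of w), and this edge has colour a.
This is a legal colouring: at every vertex the colours of incident edges are
in bijection with Omega.\<close>

definition reduced :: "'a list \<Rightarrow> bool" where
  "reduced w \<longleftrightarrow> (\<forall>i. Suc i < length w \<longrightarrow> w ! i \<noteq> w ! Suc i)"

definition TV :: "'a list set" where
  "TV = {w. reduced w}"

definition tadj :: "'a list \<Rightarrow> 'a list \<Rightarrow> bool" where
  "tadj u w \<longleftrightarrow> u \<in> TV \<and> w \<in> TV \<and> ((\<exists>a. w = u @ [a]) \<or> (\<exists>a. u = w @ [a]))"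

definition ecol :: "'a list \<Rightarrow> 'a list \<Rightarrow> 'a" where
  "ecol u w = (if length u < length w then last w else last u)"

definition nbr :: "'a list \<Rightarrow> 'a \<Rightarrow> 'a list" where
  "nbr v a = (if v \<noteq> [] \<and> last v = a then butlast v else v @ [a])"

definition Aut :: "('a list \<Rightarrow> 'a list) set" where
  "Aut = {g. bij_betw g TV TV \<and> (\<forall>u\<in>TV. \<forall>w\<in>TV. tadj u w \<longleftrightarrow> tadj (g u) (g w))
             \<and> (\<forall>x. x \<notin> TV \<longrightarrow> g x = x)}"

definition aut_group :: "('a list \<Rightarrow> 'a list) monoid" where
  "aut_group = (BijGroup (UNIV :: 'a list set))\<lparr>carrier := Aut\<rparr>"

text \<open>local permutation sigma(g,v) = c_{gv} o g_v o c_v^{-1}\<close>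
definition sigma :: "('a list \<Rightarrow> 'a list) \<Rightarrow> 'a list \<Rightarrow> 'a \<Rightarrow> 'a" where
  "sigma g v = (\<lambda>a. ecol (g v) (g (nbr v a)))"

text \<open>Sym(Omega) is BijGroup UNIV; F \<le> Sym(Omega) is subgroup F (BijGroup UNIV).\<close>

definition hatF :: "('a \<Rightarrow> 'a) set \<Rightarrow> ('a \<Rightarrow> 'a) set" where
  "hatF F = {p \<in> Bij (UNIV :: 'a set). \<forall>a. \<exists>f\<in>F. p a = f a}"

definition stab :: "('a \<Rightarrow> 'a) set \<Rightarrow> 'a \<Rightarrow> ('a \<Rightarrow> 'a) set" where
  "stab F a = {f \<in> F. f a = a}"

definition normalizer_in :: "('a \<Rightarrow> 'a) set \<Rightarrow> ('a \<Rightarrow> 'a) set \<Rightarrow> ('a \<Rightarrow> 'a) set" where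
  "normalizer_in L H = {p \<in> L. (\<lambda>f. p \<circ> f \<circ> Hilbert_Choice.inv p) ` H = H}"

definition UF :: "('a \<Rightarrow> 'a) set \<Rightarrow> ('a list \<Rightarrow> 'a list) set" where
  "UF F = {g \<in> Aut. \<forall>v\<in>TV. sigma g v \<in> F}"

definition GF :: "('a \<Rightarrow> 'a) set \<Rightarrow> ('a list \<Rightarrow> 'a list) set" where
  "GF F = {g \<in> Aut. finite {v \<in> TV. sigma g v \<notin> F}}"

definition GFF :: "('a \<Rightarrow> 'a) set \<Rightarrow> ('a \<Rightarrow> 'a) set \<Rightarrow> ('a list \<Rightarrow> 'a list) set" where
  "GFF F F' = GF F \<inter> UF F'"

text \<open>The permutation topology = topology of pointwise convergence on the discrete
vertex set; Aut carries the subspace topology of the product of discrete spaces.\<close>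
definition perm_top :: "('a list \<Rightarrow> 'a list) topology" where
  "perm_top = product_topology (\<lambda>_. discrete_topology UNIV) UNIV"

definition compact_open_subgroup_UF :: "('a \<Rightarrow> 'a) set \<Rightarrow> ('a list \<Rightarrow> 'a list) set \<Rightarrow> bool" where
  "compact_open_subgroup_UF F K \<longleftrightarrow>
     K \<subseteq> UF F \<and> subgroup K aut_group \<and>
     compactin (subtopology perm_top (UF F)) K \<and> openin (subtopology perm_top (UF F)) K"

definition open_subgroup_of :: "('a list \<Rightarrow> 'a list) set \<Rightarrow> ('a list \<Rightarrow> 'a list) set \<Rightarrow> bool" where
  "open_subgroup_of K H \<longleftrightarrow> H \<subseteq> K \<and> subgroup H aut_group \<and> openin (subtopology perm_top K) H"

definition Comm :: "('a list \<Rightarrow> 'a list) set \<Rightarrow> ('a list \<Rightarrow> 'a list) set \<Rightarrow> ('a list \<Rightarrow> 'a list) set" where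
  "Comm L K = {g \<in> L. \<exists>K1 K2. open_subgroup_of K K1 \<and> open_subgroup_of K K2 \<and>
      (\<lambda>k. g \<otimes>\<^bsub>aut_group\<^esub> k \<otimes>\<^bsub>aut_group\<^esub> inv\<^bsub>aut_group\<^esub> g) ` K1 = K2}"

end

theory Submission
  imports Defs "HOL-Library.Sublist"
begin

(*
  If g \<in> U(F') has its local permutations in F outside a finite set S of vertices, then
  conjugation by g maps the pointwise stabiliser in U(F) of a finite set B containing the
  1-neighbourhood of S onto the pointwise stabiliser of g B: an automorphism fixing the
  neighbourhood of S acts trivially around S, so every local permutation of the conjugate is a
  product of elements of F. These stabilisers form a basis of open subgroups of K.

  Conversely, if g commensurates K, conjugation by g maps the U(F)-stabiliser of some finite
  set X into U(F). Let v be a vertex not on a geodesic from the root to X, let a be the colour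
  of the edge from v to its parent and f \<in> F_a. The automorphism twisting the subtree below v
  by f fixes X, and its conjugate has local permutation \<sigma>(g,v) f \<sigma>(g,v)^-1 at g v. Hence
  \<sigma>(g,v) conjugates F_a into F; since \<sigma>(g,v) \<in> F' \<subseteq> hatF F, composing it with an element
  of F yields a permutation fixing a and normalising F_a, which lies in F_a by hypothesis.
  So \<sigma>(g,v) \<in> F for all but finitely many v.
*)

(* Plain inv is taken by the group inverse syntax of HOL-Algebra. *)
abbreviation inv_fun :: "('b \<Rightarrow> 'c) \<Rightarrow> 'c \<Rightarrow> 'b" where
  "inv_fun \<equiv> Hilbert_Choice.inv"

lemma reduced_snoc: "reduced (w @ [a]) \<longleftrightarrow> reduced w \<and> (w \<noteq> [] \<longrightarrow> last w \<noteq> a)"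
proof
  assume r: "reduced (w @ [a])"
  have "reduced w"
    unfolding reduced_def
  proof (intro allI impI)
    fix i assume "Suc i < length w"
    then show "w ! i \<noteq> w ! Suc i"
      using r[unfolded reduced_def, rule_format, of i] by (simp add: nth_append)
  qed
  moreover have "last w \<noteq> a" if "w \<noteq> []"
    using that r[unfolded reduced_def, rule_format, of "length w - 1"]
    by (simp add: nth_append last_conv_nth)
  ultimately show "reduced w \<and> (w \<noteq> [] \<longrightarrow> last w \<noteq> a)" by blast
next
  assume r: "reduced w \<and> (w \<noteq> [] \<longrightarrow> last w \<noteq> a)"
  show "reduced (w @ [a])"
    unfolding reduced_def
  proof (intro allI impI)
    fix i assume i: "Suc i < length (w @ [a])"
    show "(w @ [a]) ! i \<noteq> (w @ [a]) ! Suc i"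
    proof (cases "Suc i < length w")
      case True
      then show ?thesis using r by (simp add: nth_append reduced_def)
    next
      case False
      then have "i = length w - 1" "w \<noteq> []" using i by auto
      then show ?thesis using r by (auto simp: nth_append last_conv_nth)
    qed
  qed
qed

lemma reduced_butlast: "reduced w \<Longrightarrow> reduced (butlast w)"
  by (cases w rule: rev_cases) (auto simp: reduced_snoc)

lemma nbr_in_TV: "v \<in> TV \<Longrightarrow> nbr v a \<in> TV"
  by (auto simp: TV_def nbr_def reduced_snoc reduced_butlast)

lemma ecol_nbr: "ecol u (nbr u c) = c"
  by (cases u rule: rev_cases) (auto simp: ecol_def nbr_def)

lemma tadj_iff_nbr:
  assumes "u \<in> TV" "w \<in> TV"
  shows "tadj u w \<longleftrightarrow> (\<exists>b. w = nbr u b)"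
proof
  assume "tadj u w"
  then consider (down) a where "w = u @ [a]" | (up) a where "u = w @ [a]"
    unfolding tadj_def by blast
  then show "\<exists>b. w = nbr u b"
  proof cases
    case down
    then have "u \<noteq> [] \<longrightarrow> last u \<noteq> a" using assms(2) by (simp add: TV_def reduced_snoc)
    then show ?thesis using down by (auto simp: nbr_def)
  qed (auto simp: nbr_def)
next
  assume "\<exists>b. w = nbr u b"
  then obtain b where "w = nbr u b" by blast
  then have "u = w @ [b] \<or> w = u @ [b]"
    by (cases u rule: rev_cases) (auto simp: nbr_def split: if_splits)
  then show "tadj u w" using assms by (auto simp: tadj_def)
qed

lemma Aut_TV: "g \<in> Aut \<Longrightarrow> x \<in> TV \<Longrightarrow> g x \<in> TV"
  using bij_betw_apply[of g TV TV x] by (simp add: Aut_def)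

lemma Aut_outside_TV: "g \<in> Aut \<Longrightarrow> x \<notin> TV \<Longrightarrow> g x = x"
  unfolding Aut_def by simp

lemma Aut_tadj_iff: "g \<in> Aut \<Longrightarrow> u \<in> TV \<Longrightarrow> w \<in> TV \<Longrightarrow> tadj (g u) (g w) \<longleftrightarrow> tadj u w"
  unfolding Aut_def by simp

lemma bij_Aut:
  assumes "g \<in> Aut"
  shows "bij g"
proof -
  have "bij_betw g TV TV" using assms by (simp add: Aut_def)
  moreover have "bij_betw g (- TV) (- TV)"
    using bij_betw_cong[of "- TV" g id] Aut_outside_TV[OF assms] by simp
  ultimately have "bij_betw g (TV \<union> - TV) (TV \<union> - TV)" by (rule bij_betw_combine) blast
  then show ?thesis by simp
qed

lemma AutI:
  assumes "\<And>x. h (g x) = x" "\<And>x. g (h x) = x"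
    and "\<And>x. x \<in> TV \<Longrightarrow> g x \<in> TV" "\<And>x. x \<in> TV \<Longrightarrow> h x \<in> TV"
    and "\<And>x. x \<notin> TV \<Longrightarrow> g x = x"
    and "\<And>u w. u \<in> TV \<Longrightarrow> w \<in> TV \<Longrightarrow> tadj u w \<Longrightarrow> tadj (g u) (g w)"
    and "\<And>u w. u \<in> TV \<Longrightarrow> w \<in> TV \<Longrightarrow> tadj u w \<Longrightarrow> tadj (h u) (h w)"
  shows "g \<in> Aut"
proof -
  have "bij_betw g TV TV"
    by (rule bij_betw_byWitness[where f' = h]) (use assms(1-4) in blast)+
  moreover have "tadj u w \<longleftrightarrow> tadj (g u) (g w)" if "u \<in> TV" "w \<in> TV" for u w
    using assms(6)[OF that] assms(7)[of "g u" "g w"] assms(1,3) that by auto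
  ultimately show ?thesis using assms(5) by (auto simp: Aut_def)
qed

lemma id_in_Aut: "id \<in> Aut"
  by (rule AutI[where h = id]) auto

lemma inv_in_Aut:
  assumes g: "g \<in> Aut"
  shows "inv_fun g \<in> Aut"
proof -
  have inj: "inv_fun g (g x) = x" and surj: "g (inv_fun g x) = x" for x
    using bij_Aut[OF g] by (simp_all add: bij_is_inj bij_is_surj surj_f_inv_f)
  have TV_inv: "inv_fun g x \<in> TV" if "x \<in> TV" for x
  proof -
    have "x \<in> g ` TV" using g that by (simp add: Aut_def bij_betw_def)
    then obtain y where "y \<in> TV" "x = g y" by blast
    then show ?thesis by (simp add: inj)
  qed
  show ?thesis
  proof (rule AutI[where h = g])
    show "inv_fun g x = x" if "x \<notin> TV" for x
      using Aut_outside_TV[OF g that] inj by metis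
    show "tadj (inv_fun g u) (inv_fun g w)" if "u \<in> TV" "w \<in> TV" "tadj u w" for u w
      using that Aut_tadj_iff[OF g TV_inv TV_inv] by (simp add: surj)
    show "tadj (g u) (g w)" if "u \<in> TV" "w \<in> TV" "tadj u w" for u w
      using that Aut_tadj_iff[OF g] by blast
    show "inv_fun g (g x) = x" "g (inv_fun g x) = x" for x by (simp_all only: inj surj)
    show "x \<in> TV \<Longrightarrow> inv_fun g x \<in> TV" for x by (rule TV_inv)
    show "x \<in> TV \<Longrightarrow> g x \<in> TV" for x by (rule Aut_TV[OF g])
  qed
qed

lemma comp_in_Aut:
  assumes g: "g \<in> Aut" and k: "k \<in> Aut"
  shows "g \<circ> k \<in> Aut"
proof -
  have "bij_betw (g \<circ> k) TV TV" using g k unfolding Aut_def using bij_betw_trans by blast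
  moreover have "tadj u w \<longleftrightarrow> tadj ((g \<circ> k) u) ((g \<circ> k) w)" if "u \<in> TV" "w \<in> TV" for u w
    using Aut_tadj_iff[OF g] Aut_tadj_iff[OF k] Aut_TV[OF k] that by simp
  moreover have "(g \<circ> k) x = x" if "x \<notin> TV" for x
    using Aut_outside_TV[OF g] Aut_outside_TV[OF k] that by simp
  ultimately show ?thesis by (simp add: Aut_def)
qed

lemma Aut_nbr:
  assumes g: "g \<in> Aut" and v: "v \<in> TV"
  shows "g (nbr v a) = nbr (g v) (sigma g v a)"
proof -
  have "tadj (g v) (g (nbr v a))"
    using tadj_iff_nbr[OF v nbr_in_TV[OF v]] Aut_tadj_iff[OF g v nbr_in_TV[OF v]] by blast
  then obtain b where b: "g (nbr v a) = nbr (g v) b"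
    using tadj_iff_nbr[OF Aut_TV[OF g v] Aut_TV[OF g nbr_in_TV[OF v]]] by blast
  then have "sigma g v a = b" by (simp add: sigma_def ecol_nbr)
  then show ?thesis using b by simp
qed

lemma sigma_eqI: "(\<And>b. k (nbr w b) = nbr (k w) (p b)) \<Longrightarrow> sigma k w = p"
  by (rule ext) (simp add: sigma_def ecol_nbr)

lemma sigma_id: "sigma id w = id"
  by (rule sigma_eqI) simp

lemma sigma_comp:
  assumes "h \<in> Aut" "w \<in> TV"
  shows "sigma (g \<circ> h) w = sigma g (h w) \<circ> sigma h w"
proof
  fix a
  have "sigma (g \<circ> h) w a = ecol (g (h w)) (g (h (nbr w a)))" by (simp add: sigma_def)
  also have "\<dots> = ecol (g (h w)) (g (nbr (h w) (sigma h w a)))" by (simp only: Aut_nbr[OF assms])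
  also have "\<dots> = (sigma g (h w) \<circ> sigma h w) a" by (simp only: sigma_def comp_apply)
  finally show "sigma (g \<circ> h) w a = (sigma g (h w) \<circ> sigma h w) a" .
qed

lemma sigma_inv_fun:
  assumes g: "g \<in> Aut" and w: "w \<in> TV"
  shows "sigma (inv_fun g) (g w) = inv_fun (sigma g w)" and "bij (sigma g w)"
proof -
  have b: "bij g" by (rule bij_Aut[OF g])
  have "sigma (inv_fun g) (g w) \<circ> sigma g w = id"
    using sigma_comp[OF g w, of "inv_fun g"] b by (simp add: bij_is_inj sigma_id)
  moreover have "sigma g w \<circ> sigma (inv_fun g) (g w) = id"
    using sigma_comp[OF inv_in_Aut[OF g] Aut_TV[OF g w], of g] b
    by (simp add: bij_is_inj surj_iff[THEN iffD1, OF bij_is_surj[OF b]] sigma_id)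
  ultimately show "sigma (inv_fun g) (g w) = inv_fun (sigma g w)" "bij (sigma g w)"
    by (simp_all add: inv_unique_comp o_bij)
qed

lemma sigma_conj:
  assumes g: "g \<in> Aut" and k: "k \<in> Aut" and w: "w \<in> TV"
  shows "sigma (g \<circ> k \<circ> inv_fun g) (g w) = sigma g (k w) \<circ> sigma k w \<circ> inv_fun (sigma g w)"
proof -
  have "sigma (g \<circ> k \<circ> inv_fun g) (g w) = sigma (g \<circ> k) (inv_fun g (g w)) \<circ> sigma (inv_fun g) (g w)"
    by (rule sigma_comp[OF inv_in_Aut[OF g] Aut_TV[OF g w]])
  also have "\<dots> = sigma (g \<circ> k) w \<circ> inv_fun (sigma g w)"
    using bij_Aut[OF g] by (simp add: bij_is_inj sigma_inv_fun(1)[OF g w])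
  finally show ?thesis by (simp add: sigma_comp[OF k w] comp_assoc)
qed

lemma carrier_BijGroup_UNIV: "carrier (BijGroup UNIV) = {f. bij f}"
  by (auto simp: BijGroup_def Bij_def extensional_def)

lemma BijGroup_UNIV_mult: "bij f \<Longrightarrow> bij g \<Longrightarrow> f \<otimes>\<^bsub>BijGroup UNIV\<^esub> g = f \<circ> g"
  by (simp add: BijGroup_def compose_def comp_def restrict_UNIV Bij_def extensional_def)

lemma BijGroup_UNIV_one: "\<one>\<^bsub>BijGroup UNIV\<^esub> = id"
  by (simp add: BijGroup_def id_def restrict_UNIV)

lemma BijGroup_UNIV_inv: "bij f \<Longrightarrow> inv\<^bsub>BijGroup UNIV\<^esub> f = inv_fun f"
  by (simp add: inv_BijGroup Bij_def extensional_def restrict_UNIV)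

lemma subgroup_Aut: "subgroup Aut (BijGroup UNIV)"
proof (rule group.subgroupI[OF group_BijGroup])
  show "Aut \<subseteq> carrier (BijGroup UNIV)" using bij_Aut by (auto simp: carrier_BijGroup_UNIV)
  show "Aut \<noteq> {}" using id_in_Aut by blast
  show "inv\<^bsub>BijGroup UNIV\<^esub> g \<in> Aut" if "g \<in> Aut" for g
    using that by (simp add: BijGroup_UNIV_inv bij_Aut inv_in_Aut)
  show "g \<otimes>\<^bsub>BijGroup UNIV\<^esub> k \<in> Aut" if "g \<in> Aut" "k \<in> Aut" for g k
    using that by (simp add: BijGroup_UNIV_mult bij_Aut comp_in_Aut)
qed

lemma group_aut_group: "group aut_group"
  unfolding aut_group_def by (rule subgroup.subgroup_is_group[OF subgroup_Aut group_BijGroup])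

lemma aut_group_simps:
  "carrier aut_group = Aut"
  "g \<in> Aut \<Longrightarrow> k \<in> Aut \<Longrightarrow> g \<otimes>\<^bsub>aut_group\<^esub> k = g \<circ> k"
  "\<one>\<^bsub>aut_group\<^esub> = id"
  "g \<in> Aut \<Longrightarrow> inv\<^bsub>aut_group\<^esub> g = inv_fun g"
  by (simp_all add: aut_group_def BijGroup_UNIV_mult BijGroup_UNIV_one BijGroup_UNIV_inv bij_Aut
      group.m_inv_consistent[OF group_BijGroup subgroup_Aut])

section \<open>Pointwise stabilisers in U(F)\<close>

locale perm_group =
  fixes F :: "('a::finite \<Rightarrow> 'a) set"
  assumes subgroup_F: "subgroup F (BijGroup UNIV)"
begin

lemma bij_of_mem: "f \<in> F \<Longrightarrow> bij f"
  using subgroup.subset[OF subgroup_F] by (auto simp: carrier_BijGroup_UNIV)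

lemma comp_mem: "f \<in> F \<Longrightarrow> g \<in> F \<Longrightarrow> f \<circ> g \<in> F"
  using subgroup.m_closed[OF subgroup_F] by (simp add: BijGroup_UNIV_mult bij_of_mem)

lemma id_mem: "id \<in> F"
  using subgroup.one_closed[OF subgroup_F] by (simp add: BijGroup_UNIV_one)

lemma inv_mem: "f \<in> F \<Longrightarrow> inv_fun f \<in> F"
  using subgroup.m_inv_closed[OF subgroup_F] by (simp add: BijGroup_UNIV_inv bij_of_mem)

lemma inv_mem_iff: "bij f \<Longrightarrow> inv_fun f \<in> F \<longleftrightarrow> f \<in> F"
  using inv_mem[of "inv_fun f"] inv_mem[of f] by (auto simp: inv_inv_eq)

definition exceptional :: "('a list \<Rightarrow> 'a list) \<Rightarrow> 'a list set" where
  "exceptional g = {v \<in> TV. sigma g v \<notin> F}"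

lemma UF_eq: "UF F = {g \<in> Aut. exceptional g = {}}"
  by (auto simp: UF_def exceptional_def)

lemma GF_eq: "GF F = {g \<in> Aut. finite (exceptional g)}"
  by (simp add: GF_def exceptional_def)

lemma exceptional_inv_fun:
  assumes g: "g \<in> Aut"
  shows "exceptional (inv_fun g) = g ` exceptional g"
proof -
  have inv_g: "inv_fun g (g w) = w" and g_inv: "g (inv_fun g v) = v" for v w
    using bij_Aut[OF g] by (simp_all add: bij_is_inj bij_is_surj surj_f_inv_f)
  have key: "v \<in> exceptional (inv_fun g) \<longleftrightarrow> inv_fun g v \<in> exceptional g" for v
  proof (cases "v \<in> TV")
    case True
    then have w: "inv_fun g v \<in> TV" using Aut_TV[OF inv_in_Aut[OF g]] by blast
    have "sigma (inv_fun g) v = inv_fun (sigma g (inv_fun g v))"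
      using sigma_inv_fun(1)[OF g w] by (simp add: g_inv)
    then show ?thesis using True w inv_mem_iff[OF sigma_inv_fun(2)[OF g w]] by (simp add: exceptional_def)
  next
    case False
    then have "inv_fun g v \<notin> TV" using Aut_TV[OF g, of "inv_fun g v"] by (auto simp: g_inv)
    then show ?thesis using False by (simp add: exceptional_def)
  qed
  show ?thesis
  proof (intro equalityI subsetI)
    fix v assume "v \<in> exceptional (inv_fun g)"
    then show "v \<in> g ` exceptional g" using key g_inv[of v] by (metis image_eqI)
  next
    fix v assume "v \<in> g ` exceptional g"
    then show "v \<in> exceptional (inv_fun g)" using key inv_g by auto
  qed
qed

lemma subgroup_UF: "subgroup (UF F) aut_group"
proof (rule group.subgroupI[OF group_aut_group])
  show "UF F \<subseteq> carrier aut_group" by (auto simp: UF_def aut_group_simps)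
  show "UF F \<noteq> {}" using id_in_Aut id_mem by (auto simp: UF_def sigma_id)
  show "inv\<^bsub>aut_group\<^esub> k \<in> UF F" if k: "k \<in> UF F" for k
  proof -
    have "k \<in> Aut" "exceptional k = {}" using k by (simp_all add: UF_eq)
    then show ?thesis by (simp add: UF_eq aut_group_simps exceptional_inv_fun inv_in_Aut)
  qed
  show "k1 \<otimes>\<^bsub>aut_group\<^esub> k2 \<in> UF F" if "k1 \<in> UF F" "k2 \<in> UF F" for k1 k2
  proof -
    have k: "k1 \<in> Aut" "k2 \<in> Aut" using that by (simp_all add: UF_def)
    have "sigma (k1 \<circ> k2) v \<in> F" if "v \<in> TV" for v
      using that \<open>k1 \<in> UF F\<close> \<open>k2 \<in> UF F\<close> comp_mem Aut_TV[OF k(2)]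
      by (simp add: sigma_comp[OF k(2)] UF_def)
    then show ?thesis using k by (simp add: UF_def aut_group_simps comp_in_Aut)
  qed
qed

definition UF_fixing :: "'a list set \<Rightarrow> ('a list \<Rightarrow> 'a list) set" where
  "UF_fixing X = {k \<in> UF F. \<forall>x\<in>X. k x = x}"

lemma UF_fixing_antimono: "X \<subseteq> Y \<Longrightarrow> UF_fixing Y \<subseteq> UF_fixing X"
  by (auto simp: UF_fixing_def)

lemma subgroup_UF_fixing: "subgroup (UF_fixing X) aut_group"
proof (rule group.subgroupI[OF group_aut_group])
  show "UF_fixing X \<subseteq> carrier aut_group"
    using subgroup.subset[OF subgroup_UF] by (auto simp: UF_fixing_def)
  show "UF_fixing X \<noteq> {}"
    using subgroup.one_closed[OF subgroup_UF] by (auto simp: UF_fixing_def aut_group_simps)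
  show "inv\<^bsub>aut_group\<^esub> k \<in> UF_fixing X" if k: "k \<in> UF_fixing X" for k
  proof -
    have "k \<in> Aut" using k by (simp add: UF_fixing_def UF_def)
    then have "inv_fun k x = x" if "x \<in> X" for x
      using k that inv_f_f[OF bij_is_inj[OF bij_Aut[OF \<open>k \<in> Aut\<close>]], of x] by (simp add: UF_fixing_def)
    moreover have "inv\<^bsub>aut_group\<^esub> k \<in> UF F"
      using k subgroup.m_inv_closed[OF subgroup_UF] by (simp add: UF_fixing_def)
    ultimately show ?thesis using \<open>k \<in> Aut\<close> by (simp add: UF_fixing_def aut_group_simps)
  qed
  show "k1 \<otimes>\<^bsub>aut_group\<^esub> k2 \<in> UF_fixing X" if "k1 \<in> UF_fixing X" "k2 \<in> UF_fixing X" for k1 k2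
    using that subgroup.m_closed[OF subgroup_UF] by (auto simp: UF_fixing_def UF_def aut_group_simps)
qed

end

section \<open>Open subgroups in the permutation topology\<close>

lemma topspace_perm_top [simp]: "topspace perm_top = UNIV"
  by (simp add: perm_top_def)

lemma openin_perm_top_fixing:
  assumes "finite X"
  shows "openin perm_top {f. \<forall>x\<in>X. f x = x}"
proof -
  have "openin perm_top {f. f x = x}" for x
  proof -
    have "continuous_map perm_top (discrete_topology UNIV) (\<lambda>f. f x)"
      unfolding perm_top_def by (rule continuous_map_product_projection) simp
    then have "openin perm_top {f \<in> topspace perm_top. f x \<in> {x}}"
      by (rule openin_continuous_map_preimage) simp
    then show ?thesis by simp
  qed
  then have "openin perm_top ((\<Inter>x\<in>X. {f. f x = x}) \<inter> topspace perm_top)"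
    using assms by blast
  moreover have "(\<Inter>x\<in>X. {f. f x = x}) \<inter> topspace perm_top = {f. \<forall>x\<in>X. f x = x}" by auto
  ultimately show ?thesis by simp
qed

lemma fixing_subset_if_openin:
  assumes "openin (subtopology perm_top U) H" and "id \<in> H"
  obtains X where "finite X" and "{f \<in> U. \<forall>x\<in>X. f x = x} \<subseteq> H"
proof -
  obtain T where T: "openin perm_top T" "H = T \<inter> U"
    using assms(1) by (auto simp: openin_subtopology)
  then obtain V where V: "finite {x. V x \<noteq> UNIV}" "id \<in> Pi\<^sub>E UNIV V" "Pi\<^sub>E UNIV V \<subseteq> T"
    using assms(2) unfolding perm_top_def openin_product_topology_alt by force
  have "f \<in> T" if "\<forall>x\<in>{x. V x \<noteq> UNIV}. f x = x" for f
  proof -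
    have "f x \<in> V x" for x
      using that V(2) by (cases "V x = UNIV") (auto simp: PiE_iff)
    then show ?thesis using V(3) by (auto simp: PiE_iff)
  qed
  then show ?thesis using that[OF V(1)] T(2) by blast
qed

lemma open_subgroup_of_self: "subgroup K aut_group \<Longrightarrow> open_subgroup_of K K"
  using openin_topspace[of "subtopology perm_top K"] by (simp add: open_subgroup_of_def)

lemma subset_Aut_if_open_subgroup_of: "open_subgroup_of K H \<Longrightarrow> H \<subseteq> Aut"
  unfolding open_subgroup_of_def using subgroup.subset[of H aut_group] by (simp add: aut_group_simps)

lemma Comm_eq:
  assumes "L \<subseteq> Aut"
  shows "Comm L K = {g \<in> L. \<exists>K1 K2. open_subgroup_of K K1 \<and> open_subgroup_of K K2 \<and>
                          (\<lambda>k. g \<circ> k \<circ> inv_fun g) ` K1 = K2}"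
proof -
  have aut_group_conj: "(\<lambda>k. g \<otimes>\<^bsub>aut_group\<^esub> k \<otimes>\<^bsub>aut_group\<^esub> inv\<^bsub>aut_group\<^esub> g) ` H
      = (\<lambda>k. g \<circ> k \<circ> inv_fun g) ` H"
    if "g \<in> L" "open_subgroup_of K H" for g H
  proof (rule image_cong[OF refl])
    fix k assume "k \<in> H"
    then have "g \<in> Aut" "k \<in> Aut" using that assms subset_Aut_if_open_subgroup_of by blast+
    then show "g \<otimes>\<^bsub>aut_group\<^esub> k \<otimes>\<^bsub>aut_group\<^esub> inv\<^bsub>aut_group\<^esub> g = g \<circ> k \<circ> inv_fun g"
      by (simp add: aut_group_simps comp_in_Aut inv_in_Aut)
  qed
  show ?thesis
    unfolding Comm_def
  proof (intro Collect_cong conj_cong refl ex_cong1)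
    fix g K1 K2 assume "g \<in> L" "open_subgroup_of K K1"
    then show "((\<lambda>k. g \<otimes>\<^bsub>aut_group\<^esub> k \<otimes>\<^bsub>aut_group\<^esub> inv\<^bsub>aut_group\<^esub> g) ` K1 = K2)
        = ((\<lambda>k. g \<circ> k \<circ> inv_fun g) ` K1 = K2)"
      by (simp only: aut_group_conj)
  qed
qed

context perm_group
begin

lemma open_subgroup_of_UF_fixing:
  assumes "K \<subseteq> UF F" and "finite X" and "UF_fixing X \<subseteq> K"
  shows "open_subgroup_of K (UF_fixing X)"
proof -
  have "UF_fixing X = {f. \<forall>x\<in>X. f x = x} \<inter> K"
    using assms(1,3) by (auto simp: UF_fixing_def)
  then have "openin (subtopology perm_top K) (UF_fixing X)"
    using openin_perm_top_fixing[OF assms(2)] by (auto simp: openin_subtopology)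
  then show ?thesis using assms(3) subgroup_UF_fixing by (simp add: open_subgroup_of_def)
qed

lemma UF_fixing_subset_open_subgroup:
  assumes K: "compact_open_subgroup_UF F K" and H: "open_subgroup_of K H"
  obtains X where "finite X" and "UF_fixing X \<subseteq> H"
proof -
  have K_open: "openin (subtopology perm_top (UF F)) K" and H_open: "openin (subtopology perm_top K) H"
    using K H by (simp_all add: compact_open_subgroup_UF_def open_subgroup_of_def)
  have "id \<in> K" "id \<in> H"
    using K H subgroup.one_closed[of K aut_group] subgroup.one_closed[of H aut_group]
    by (simp_all add: compact_open_subgroup_UF_def open_subgroup_of_def aut_group_simps)
  obtain X0 where "finite X0" "{f \<in> UF F. \<forall>x\<in>X0. f x = x} \<subseteq> K"
    using fixing_subset_if_openin[OF K_open \<open>id \<in> K\<close>] by blast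
  moreover obtain X1 where "finite X1" "{f \<in> K. \<forall>x\<in>X1. f x = x} \<subseteq> H"
    using fixing_subset_if_openin[OF H_open \<open>id \<in> H\<close>] by blast
  ultimately have "finite (X0 \<union> X1)" "UF_fixing (X0 \<union> X1) \<subseteq> H" by (auto simp: UF_fixing_def)
  then show ?thesis by (rule that)
qed

end

section \<open>Elements of G(F,F') commensurate K\<close>

definition nbhd :: "'a list set \<Rightarrow> 'a list set" where
  "nbhd S = S \<union> (\<Union>v\<in>S. range (nbr v))"

lemma finite_nbhd: "finite S \<Longrightarrow> finite (nbhd (S :: 'a::finite list set))"
  by (simp add: nbhd_def)

context perm_group
begin

lemma conj_in_UF:
  assumes g: "g \<in> Aut" and k: "k \<in> UF F" and fixes_nbhd: "\<forall>x\<in>nbhd (exceptional g). k x = x"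
  shows "g \<circ> k \<circ> inv_fun g \<in> UF F"
proof -
  have ka: "k \<in> Aut" using k by (simp add: UF_def)
  have "sigma (g \<circ> k \<circ> inv_fun g) (g w) \<in> F" if w: "w \<in> TV" for w
  proof (cases "w \<in> exceptional g")
    case True
    then have "w \<in> nbhd (exceptional g)" "nbr w b \<in> nbhd (exceptional g)" for b
      by (auto simp: nbhd_def)
    then have kw: "k w = w" and "sigma k w = id"
      using fixes_nbhd by (auto intro!: sigma_eqI)
    then show ?thesis
      using sigma_conj[OF g ka w] surj_iff[THEN iffD1, OF bij_is_surj[OF sigma_inv_fun(2)[OF g w]]] id_mem
      by simp
  next
    case False
    have "k w \<notin> exceptional g"
    proof
      assume "k w \<in> exceptional g"
      then have "k (k w) = k w" using fixes_nbhd by (simp add: nbhd_def)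
      then have "k w = w" using bij_Aut[OF ka] by (simp add: bij_is_inj inj_eq)
      then show False using False \<open>k w \<in> exceptional g\<close> by simp
    qed
    then have "sigma g (k w) \<in> F" "sigma k w \<in> F" "inv_fun (sigma g w) \<in> F"
      using False w k Aut_TV[OF ka w] inv_mem by (simp_all add: exceptional_def UF_def)
    then show ?thesis using sigma_conj[OF g ka w] comp_mem by simp
  qed
  moreover have "v = g (inv_fun g v)" "inv_fun g v \<in> TV" if "v \<in> TV" for v
    using that bij_Aut[OF g] Aut_TV[OF inv_in_Aut[OF g]] by (simp_all add: bij_is_surj surj_f_inv_f)
  ultimately have "sigma (g \<circ> k \<circ> inv_fun g) v \<in> F" if "v \<in> TV" for v
    using that by metis
  then show ?thesis using g ka by (simp add: UF_def comp_in_Aut inv_in_Aut)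
qed

lemma conj_image_UF_fixing_subset:
  assumes g: "g \<in> Aut" and B: "nbhd (exceptional g) \<subseteq> B"
  shows "(\<lambda>k. g \<circ> k \<circ> inv_fun g) ` UF_fixing B \<subseteq> UF_fixing (g ` B)"
proof clarify
  fix k assume k: "k \<in> UF_fixing B"
  then have "g \<circ> k \<circ> inv_fun g \<in> UF F"
    using B conj_in_UF[OF g] by (auto simp: UF_fixing_def)
  moreover have "(g \<circ> k \<circ> inv_fun g) (g b) = g b" if "b \<in> B" for b
    using k that bij_Aut[OF g] by (simp add: UF_fixing_def bij_is_inj)
  ultimately show "g \<circ> k \<circ> inv_fun g \<in> UF_fixing (g ` B)" by (simp add: UF_fixing_def)
qed

lemma conj_image_UF_fixing:
  assumes g: "g \<in> Aut"
    and B: "nbhd (exceptional g) \<subseteq> B" and gB: "nbhd (g ` exceptional g) \<subseteq> g ` B"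
  shows "(\<lambda>k. g \<circ> k \<circ> inv_fun g) ` UF_fixing B = UF_fixing (g ` B)"
proof
  show "(\<lambda>k. g \<circ> k \<circ> inv_fun g) ` UF_fixing B \<subseteq> UF_fixing (g ` B)"
    by (rule conj_image_UF_fixing_subset[OF g B])
next
  have b: "bij g" by (rule bij_Aut[OF g])
  show "UF_fixing (g ` B) \<subseteq> (\<lambda>k. g \<circ> k \<circ> inv_fun g) ` UF_fixing B"
  proof
    fix h assume h: "h \<in> UF_fixing (g ` B)"
    have "(\<lambda>k. inv_fun g \<circ> k \<circ> inv_fun (inv_fun g)) ` UF_fixing (g ` B) \<subseteq> UF_fixing (inv_fun g ` g ` B)"
      using conj_image_UF_fixing_subset[OF inv_in_Aut[OF g], of "g ` B"] gB
      by (simp add: exceptional_inv_fun[OF g])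
    then have "inv_fun g \<circ> h \<circ> inv_fun (inv_fun g) \<in> UF_fixing (inv_fun g ` g ` B)"
      using h by blast
    then have "inv_fun g \<circ> h \<circ> g \<in> UF_fixing B"
      using b by (simp add: inv_inv_eq image_comp bij_is_inj)
    moreover have "h = g \<circ> (inv_fun g \<circ> h \<circ> g) \<circ> inv_fun g"
      using b by (simp add: fun_eq_iff bij_is_surj surj_f_inv_f)
    ultimately show "h \<in> (\<lambda>k. g \<circ> k \<circ> inv_fun g) ` UF_fixing B" by blast
  qed
qed

lemma GFF_subset_Comm:
  assumes K: "compact_open_subgroup_UF F K"
  shows "GFF F F' \<subseteq> Comm (UF F') K"
proof
  fix g assume g: "g \<in> GFF F F'"
  then have gU': "g \<in> UF F'" and ga: "g \<in> Aut" and fin: "finite (exceptional g)"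
    by (simp_all add: GFF_def GF_eq)
  have KU: "K \<subseteq> UF F" and "subgroup K aut_group" using K by (simp_all add: compact_open_subgroup_UF_def)
  then obtain X where X: "finite X" "UF_fixing X \<subseteq> K"
    using UF_fixing_subset_open_subgroup[OF K open_subgroup_of_self] by blast
  define S where "S = exceptional g"
  define B where "B = X \<union> nbhd S \<union> inv_fun g ` (X \<union> nbhd (g ` S))"
  have B_sub: "X \<union> nbhd S \<subseteq> B" and gB_sub: "X \<union> nbhd (g ` S) \<subseteq> g ` B"
    using image_f_inv_f[OF bij_is_surj[OF bij_Aut[OF ga]]] unfolding B_def image_Un by blast+
  have fin_B: "finite B" using fin X(1) by (simp add: B_def S_def finite_nbhd)
  have "open_subgroup_of K (UF_fixing B)"
    using open_subgroup_of_UF_fixing[OF KU fin_B] UF_fixing_antimono[of X B] B_sub X(2) by blast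
  moreover have "open_subgroup_of K (UF_fixing (g ` B))"
    using open_subgroup_of_UF_fixing[OF KU finite_imageI[OF fin_B]] UF_fixing_antimono[of X "g ` B"]
      gB_sub X(2) by blast
  moreover have "(\<lambda>k. g \<circ> k \<circ> inv_fun g) ` UF_fixing B = UF_fixing (g ` B)"
    using conj_image_UF_fixing[OF ga] B_sub gB_sub by (simp add: S_def)
  moreover have "UF F' \<subseteq> Aut" by (auto simp: UF_def)
  ultimately show "g \<in> Comm (UF F') K"
    using gU' unfolding Comm_eq[OF \<open>UF F' \<subseteq> Aut\<close>] by blast
qed

end

section \<open>Twisting a subtree\<close>

definition twist :: "'a list \<Rightarrow> ('a \<Rightarrow> 'a) \<Rightarrow> 'a list \<Rightarrow> 'a list" where
  "twist v f w = (if prefix v w \<and> w \<in> TV then v @ map f (drop (length v) w) else w)"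

lemma twist_append: "v @ x \<in> TV \<Longrightarrow> twist v f (v @ x) = v @ map f x"
  by (simp add: twist_def)

lemma twist_not_prefix: "\<not> prefix v w \<Longrightarrow> twist v f w = w"
  by (simp add: twist_def)

lemma twist_outside_TV: "w \<notin> TV \<Longrightarrow> twist v f w = w"
  by (simp add: twist_def)

lemma reduced_append_map:
  assumes "reduced (v @ x)" and "v \<noteq> []" and "inj f" and "f (last v) = last v"
  shows "reduced (v @ map f x) \<and> last (v @ map f x) = f (last (v @ x))"
  using assms(1)
proof (induction x rule: rev_induct)
  case (snoc b x)
  then have "reduced (v @ x)" "last (v @ x) \<noteq> b"
    using reduced_snoc[of "v @ x" b] assms(2) by auto
  then show ?case
    using snoc.IH assms(3) reduced_snoc[of "v @ map f x" "f b"] by (simp add: inj_eq)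
qed (use assms in simp)

(* The edge from v to its parent butlast v has colour last v, which f must fix. *)
locale subtree_twist =
  fixes v :: "'a list" and f :: "'a \<Rightarrow> 'a"
  assumes v_TV: "v \<in> TV" and v_ne: "v \<noteq> []" and bij_f: "bij f" and f_last: "f (last v) = last v"
begin

lemma reduced_twist_append:
  assumes "v @ x \<in> TV"
  shows "v @ map f x \<in> TV" and "last (v @ map f x) = f (last (v @ x))"
  using reduced_append_map[of v x f] assms v_ne bij_f f_last by (simp_all add: TV_def bij_is_inj)

lemma twist_TV: "w \<in> TV \<Longrightarrow> twist v f w \<in> TV"
  by (cases "prefix v w") (auto simp: prefix_def twist_append reduced_twist_append twist_not_prefix)

lemma twist_nbr_prefix:
  assumes w: "w \<in> TV" and "prefix v w"
  shows "twist v f (nbr w b) = nbr (twist v f w) (f b)"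
proof -
  obtain x where x: "w = v @ x" using assms(2) by (auto simp: prefix_def)
  have tw: "twist v f w = v @ map f x" using w x by (simp add: twist_append)
  show ?thesis
  proof (cases "last w = b")
    case last_w: True
    show ?thesis
    proof (cases "x = []")
      case True
      have "\<not> prefix v (butlast v)"
        using v_ne prefix_length_le[of v "butlast v"] by (cases v rule: rev_cases) auto
      then show ?thesis
        using True x tw last_w f_last v_ne by (simp add: nbr_def twist_not_prefix)
    next
      case False
      have "butlast w \<in> TV" using w by (simp add: TV_def reduced_butlast)
      moreover have "last (twist v f w) = f b" using tw x False last_w by (simp add: last_map)
      ultimately show ?thesis
        using x tw False last_w v_ne
        by (simp add: nbr_def butlast_append map_butlast twist_append)
    qed
  next
    case False
    then have nb: "nbr w b = v @ (x @ [b])" by (simp add: nbr_def x)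
    have "last (twist v f w) \<noteq> f b"
      using reduced_twist_append(2) w x tw False bij_f by (simp add: bij_is_inj inj_eq)
    then show ?thesis
      using nb nbr_in_TV[OF w, of b] tw v_ne by (simp add: nbr_def twist_append)
  qed
qed

lemma twist_nbr_not_prefix:
  assumes "\<not> prefix v w"
  shows "twist v f (nbr w b) = nbr w b"
proof (cases "w \<noteq> [] \<and> last w = b")
  case True
  then have "\<not> prefix v (butlast w)"
    using assms append_butlast_last_id[of w] by (metis prefix_snoc prefix_order.trans)
  then show ?thesis using True by (simp add: nbr_def twist_not_prefix)
next
  case False
  then have nb: "nbr w b = w @ [b]" by (auto simp: nbr_def)
  show ?thesis
  proof (cases "prefix v (w @ [b])")
    case True
    then have "w @ [b] = v" using assms by (simp add: prefix_snoc)
    then show ?thesis using nb v_TV twist_append[of v "[]" f] by simp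
  qed (simp add: nb twist_not_prefix)
qed

lemma twist_nbr: "w \<in> TV \<Longrightarrow> twist v f (nbr w b) = nbr (twist v f w) (if prefix v w then f b else b)"
  by (cases "prefix v w") (simp_all add: twist_nbr_prefix twist_nbr_not_prefix twist_not_prefix)

lemma twist_inv_fun_twist: "twist v (inv_fun f) (twist v f w) = w"
proof (cases "prefix v w \<and> w \<in> TV")
  case True
  then obtain x where x: "w = v @ x" "w \<in> TV" by (auto simp: prefix_def)
  then show ?thesis
    using reduced_twist_append(1) bij_f by (simp add: twist_append bij_is_inj comp_def)
qed (auto simp: twist_def)

lemma sigma_twist: "w \<in> TV \<Longrightarrow> sigma (twist v f) w = (if prefix v w then f else id)"
  by (rule sigma_eqI) (simp add: twist_nbr)

end

lemma subtree_twist_inv_fun: "subtree_twist v f \<Longrightarrow> subtree_twist v (inv_fun f)"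
  unfolding subtree_twist_def by (metis bij_imp_bij_inv bij_is_inj inv_f_f)

lemma twist_in_Aut:
  assumes "subtree_twist v f"
  shows "twist v f \<in> Aut"
proof -
  interpret f: subtree_twist v f by (rule assms)
  interpret f_inv: subtree_twist v "inv_fun f" by (rule subtree_twist_inv_fun[OF assms])
  have adj: "tadj (twist v h u) (twist v h w)"
    if h: "subtree_twist v h" and uw: "u \<in> TV" "w \<in> TV" "tadj u w" for h u w
  proof -
    interpret h: subtree_twist v h by (rule h)
    obtain b where "w = nbr u b" using tadj_iff_nbr uw by blast
    then show ?thesis
      using h.twist_nbr[OF uw(1)] tadj_iff_nbr[OF h.twist_TV[OF uw(1)] h.twist_TV[OF uw(2)]] by blast
  qed
  show ?thesis
  proof (rule AutI[where h = "twist v (inv_fun f)"])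
    show "twist v (inv_fun f) (twist v f x) = x" for x by (rule f.twist_inv_fun_twist)
    show "twist v f (twist v (inv_fun f) x) = x" for x
      using f_inv.twist_inv_fun_twist[of x] f.bij_f by (simp add: inv_inv_eq)
  qed (use f.twist_TV f_inv.twist_TV twist_outside_TV adj assms subtree_twist_inv_fun in blast)+
qed

section \<open>Elements commensurating K lie in G(F,F')\<close>

lemma sigma_conj_twist:
  assumes g: "g \<in> Aut" and tw: "subtree_twist v f"
  shows "sigma (g \<circ> twist v f \<circ> inv_fun g) (g v) = sigma g v \<circ> f \<circ> inv_fun (sigma g v)"
proof -
  interpret subtree_twist v f by (rule tw)
  have "twist v f v = v" using twist_append[of v "[]" f] v_TV by simp
  then show ?thesis
    using sigma_conj[OF g twist_in_Aut[OF tw] v_TV] sigma_twist[OF v_TV] by simp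
qed

lemma conj_image_eq_if_subset:
  assumes "finite H" and q: "bij q" and "(\<lambda>f. q \<circ> f \<circ> inv_fun q) ` H \<subseteq> H"
  shows "(\<lambda>f. q \<circ> f \<circ> inv_fun q) ` H = H"
proof -
  have cancel: "inv_fun q \<circ> (q \<circ> f \<circ> inv_fun q) \<circ> q = f" for f
    using bij_is_inj[OF q] by (simp add: fun_eq_iff)
  have "inj_on (\<lambda>f. q \<circ> f \<circ> inv_fun q) H"
  proof (rule inj_onI)
    fix f f' assume eq: "q \<circ> f \<circ> inv_fun q = q \<circ> f' \<circ> inv_fun q"
    have "f = inv_fun q \<circ> (q \<circ> f \<circ> inv_fun q) \<circ> q" by (rule cancel[symmetric])
    also have "\<dots> = f'" by (simp only: eq cancel)
    finally show "f = f'" .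
  qed
  then have "card ((\<lambda>f. q \<circ> f \<circ> inv_fun q) ` H) = card H" by (rule card_image)
  then show ?thesis by (rule card_subset_eq[OF assms(1) assms(3)])
qed

lemma mem_if_conj_stab_subset:
  fixes F F' :: "('a::finite \<Rightarrow> 'a) set"
  assumes F: "perm_group F" and F': "perm_group F'" and "F \<subseteq> F'" and "F' \<subseteq> hatF F"
    and self_normalising: "normalizer_in (stab F' a) (stab F a) = stab F a"
    and p: "p \<in> F'" and conj_into_F: "\<And>f. f \<in> stab F a \<Longrightarrow> p \<circ> f \<circ> inv_fun p \<in> F"
  shows "p \<in> F"
proof -
  interpret F: perm_group F by (rule F)
  interpret F': perm_group F' by (rule F')
  have "p \<in> hatF F" using \<open>F' \<subseteq> hatF F\<close> p by blast
  then obtain f0 where f0: "f0 \<in> F" "p a = f0 a" unfolding hatF_def by blast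
  define q where "q = inv_fun f0 \<circ> p"
  have b0: "bij f0" and bp: "bij p" using F.bij_of_mem[OF f0(1)] F'.bij_of_mem[OF p] .
  have "f0 \<in> F'" using f0(1) \<open>F \<subseteq> F'\<close> by blast
  then have q: "q \<in> F'" unfolding q_def using F'.comp_mem[OF F'.inv_mem p] by simp
  have qa: "q a = a" unfolding q_def using f0(2) b0 by (simp add: bij_is_inj)
  have inv_q: "inv_fun q = inv_fun p \<circ> f0"
    unfolding q_def using o_inv_distrib[OF bij_imp_bij_inv[OF b0] bp] b0 by (simp add: inv_inv_eq)
  have "(\<lambda>f. q \<circ> f \<circ> inv_fun q) ` stab F a \<subseteq> stab F a"
  proof clarify
    fix f assume f: "f \<in> stab F a"
    have "q \<circ> f \<circ> inv_fun q = inv_fun f0 \<circ> (p \<circ> f \<circ> inv_fun p) \<circ> f0"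
      unfolding inv_q by (simp add: q_def comp_assoc)
    then have "q \<circ> f \<circ> inv_fun q \<in> F"
      using F.comp_mem F.inv_mem f0(1) conj_into_F[OF f] by simp
    moreover have "inv_fun q a = a" using qa F'.bij_of_mem[OF q] by (metis bij_is_inj inv_f_f)
    ultimately show "q \<circ> f \<circ> inv_fun q \<in> stab F a" using f qa by (simp add: stab_def)
  qed
  then have "(\<lambda>f. q \<circ> f \<circ> inv_fun q) ` stab F a = stab F a"
    using conj_image_eq_if_subset[OF finite[of "stab F a"] F'.bij_of_mem[OF q]] by blast
  then have "q \<in> normalizer_in (stab F' a) (stab F a)"
    using q qa by (simp add: normalizer_in_def stab_def)
  then have "q \<in> F" using self_normalising by (simp add: stab_def)
  moreover have "p = f0 \<circ> q" unfolding q_def using b0 by (simp add: fun_eq_iff bij_is_surj surj_f_inv_f)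
  ultimately show ?thesis using F.comp_mem[OF f0(1)] by simp
qed

context perm_group
begin

lemma twist_in_UF_fixing:
  assumes tw: "subtree_twist v f" and f: "f \<in> F" and X: "\<forall>s\<in>X. \<not> prefix v s"
  shows "twist v f \<in> UF_fixing X"
  using twist_in_Aut[OF tw] subtree_twist.sigma_twist[OF tw] f id_mem X twist_not_prefix[of v _ f]
  by (simp add: UF_fixing_def UF_def)

lemma Comm_subset_GFF:
  fixes F' :: "('a \<Rightarrow> 'a) set"
  assumes F': "perm_group F'" and FF': "F \<subseteq> F'" and hat: "F' \<subseteq> hatF F"
    and self_normalising: "\<forall>a. normalizer_in (stab F' a) (stab F a) = stab F a"
    and K: "compact_open_subgroup_UF F K"
  shows "Comm (UF F') K \<subseteq> GFF F F'"
proof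
  fix g assume "g \<in> Comm (UF F') K"
  moreover have "UF F' \<subseteq> Aut" by (auto simp: UF_def)
  ultimately obtain K1 K2 where g: "g \<in> UF F'" and K1: "open_subgroup_of K K1"
    and K2: "open_subgroup_of K K2" and img: "(\<lambda>k. g \<circ> k \<circ> inv_fun g) ` K1 = K2"
    by (auto simp: Comm_eq)
  have ga: "g \<in> Aut" using g by (simp add: UF_def)
  obtain X where X: "finite X" "UF_fixing X \<subseteq> K1"
    using UF_fixing_subset_open_subgroup[OF K K1] by blast
  have K2_UF: "K2 \<subseteq> UF F" using K K2 by (auto simp: compact_open_subgroup_UF_def open_subgroup_of_def)
  have "sigma g v \<in> F" if v: "v \<in> TV" "v \<noteq> []" "\<forall>s\<in>X. \<not> prefix v s" for v
  proof (rule mem_if_conj_stab_subset[OF perm_group_axioms F' FF' hat self_normalising[rule_format]])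
    show "sigma g v \<in> F'" using g v by (simp add: UF_def)
    fix f assume f: "f \<in> stab F (last v)"
    then have tw: "subtree_twist v f" using v bij_of_mem by unfold_locales (auto simp: stab_def)
    then have "twist v f \<in> K1" using twist_in_UF_fixing f v(3) X(2) by (auto simp: stab_def)
    then have "g \<circ> twist v f \<circ> inv_fun g \<in> UF F" using img K2_UF by blast
    then show "sigma g v \<circ> f \<circ> inv_fun (sigma g v) \<in> F"
      using sigma_conj_twist[OF ga tw] Aut_TV[OF ga v(1)] unfolding UF_def by force
  qed
  then have "exceptional g \<subseteq> insert [] (\<Union>s\<in>X. set (prefixes s))"
    by (auto simp: exceptional_def set_prefixes_eq)
  then have "finite (exceptional g)" by (rule finite_subset) (simp add: X(1))
  then show "g \<in> GFF F F'" using g ga by (simp add: GFF_def GF_eq)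
qed

end

theorem proposition1p8:
  fixes F F' :: "('a::finite \<Rightarrow> 'a) set"
  assumes "CARD('a) \<ge> 3"
    and "subgroup F (BijGroup (UNIV :: 'a set))"
    and "subgroup F' (BijGroup (UNIV :: 'a set))"
    and "F \<subseteq> F'" and "F' \<subseteq> hatF F"
    and "\<forall>a. normalizer_in (stab F' a) (stab F a) = stab F a"
    and "compact_open_subgroup_UF F K"
  shows "Comm (UF F') K = GFF F F'"
proof
  interpret perm_group F by (rule perm_group.intro) fact
  show "Comm (UF F') K \<subseteq> GFF F F'"
    by (rule Comm_subset_GFF) (rule perm_group.intro, fact+)
  show "GFF F F' \<subseteq> Comm (UF F') K"
    by (rule GFF_subset_Comm) fact
qed

end
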